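(* Let $G$ be a compact abelian group with discrete dual group $\Gamma$, let $N \in \mathbb{N}$, let $E \subset \Gamma$ be $N$-PR and let $\gamma \in \Gamma$ satisfy $\langle E \rangle \cap \langle \gamma \rangle = \{1\}$. Then $\gamma E = \{\gamma \gamma' : \gamma' \in E\}$ is also $N$-PR.
   Context: Characters are written multiplicatively; $\langle S \rangle$ denotes the subgroup generated by $S$. $\mathbb{Z}_N$ is identified with the $N$-th roots of unity in the unit circle $\mathbb{T}$. A subset $E \subset \Gamma$ is $N$-PR if for every function $\varphi: E \to \mathbb{Z}_N$ there exists $x \in G$ with $\varphi(\gamma) = \gamma(x)$ for all $\gamma \in E$. *)

theory Defs
  imports "HOL-Analysis.Analysis"
begin

text \<open>A compact abelian group G is modelled as a type 'g of class
  topological_group_add, ab_group_add, t2_space with compact UNIV (written additively).\<close>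

definition is_character :: "('g::{topological_group_add, ab_group_add} \<Rightarrow> complex) \<Rightarrow> bool" where
  "is_character c \<longleftrightarrow> continuous_on UNIV c \<and> (\<forall>x. norm (c x) = 1) \<and>
     (\<forall>x y. c (x + y) = c x * c y)"

definition dual_group :: "('g::{topological_group_add, ab_group_add} \<Rightarrow> complex) set" where
  "dual_group = {c. is_character c}"

inductive_set gen_subgroup :: "('g \<Rightarrow> complex) set \<Rightarrow> ('g \<Rightarrow> complex) set"
  for S :: "('g \<Rightarrow> complex) set" where
  one: "(\<lambda>x. 1) \<in> gen_subgroup S"
| base: "c \<in> S \<Longrightarrow> c \<in> gen_subgroup S"
| mult: "c \<in> gen_subgroup S \<Longrightarrow> \<psi> \<in> gen_subgroup S \<Longrightarrow> (\<lambda>x. c x * \<psi> x) \<in> gen_subgroup S"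
| inv: "c \<in> gen_subgroup S \<Longrightarrow> (\<lambda>x. inverse (c x)) \<in> gen_subgroup S"

text \<open>Z_N identified with the N-th roots of unity.\<close>
definition roots_of_unity :: "nat \<Rightarrow> complex set" where
  "roots_of_unity N = {z. z ^ N = 1}"

definition N_PR :: "nat \<Rightarrow> ('g \<Rightarrow> complex) set \<Rightarrow> bool" where
  "N_PR N E \<longleftrightarrow> (\<forall>\<phi>. (\<forall>c\<in>E. \<phi> c \<in> roots_of_unity N) \<longrightarrow>
      (\<exists>x. \<forall>c\<in>E. \<phi> c = c x))"

definition translate_set :: "('g \<Rightarrow> complex) \<Rightarrow> ('g \<Rightarrow> complex) set \<Rightarrow> ('g \<Rightarrow> complex) set" where
  "translate_set \<gamma> E = (\<lambda>c. \<lambda>x. \<gamma> x * c x) ` E"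

end

(*
  Let A(F) be the annihilator of a set F of characters.  Given phi on gamma E, the N-PR
  property of E yields x0 with c x0 = phi (gamma c) for all c in E, so it suffices to find
  y in A(E) with gamma y = gamma (- x0), i.e. to show gamma ` A(E) = gamma ` G.  By
  compactness of G this reduces to finite F contained in E.  The image gamma ` A(F) is a
  closed subgroup of the circle, hence the whole circle or the group of m-th roots of unity.
  In the second case gamma^m is trivial on A(F), and the duality "a character trivial on
  A(F) lies in the group generated by F" puts gamma^m into <F> meet <gamma> = {1}, so all
  values of gamma are m-th roots of unity as well.  The duality is proved by induction on F,
  using that every continuous character of a closed subgroup of the circle is a power z^k.
*)
theory Submission
  imports Defs
begin

section \<open>Closed subgroups and continuous homomorphisms of the real line\<close>

definition closed_add_subgroup :: "'a::{topological_space, ab_group_add} set \<Rightarrow> bool" where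
  "closed_add_subgroup S \<longleftrightarrow>
     closed S \<and> 0 \<in> S \<and> (\<forall>x\<in>S. \<forall>y\<in>S. x + y \<in> S) \<and> (\<forall>x\<in>S. - x \<in> S)"

lemma closed_add_subgroup_diff:
  "closed_add_subgroup S \<Longrightarrow> x \<in> S \<Longrightarrow> y \<in> S \<Longrightarrow> x - y \<in> S"
  by (metis closed_add_subgroup_def diff_conv_add_uminus)

lemma closed_add_subgroup_Int:
  "closed_add_subgroup S \<Longrightarrow> closed_add_subgroup T \<Longrightarrow> closed_add_subgroup (S \<inter> T)"
  by (auto simp: closed_add_subgroup_def)

lemma closed_add_subgroup_compact:
  fixes S :: "'a::{topological_space, ab_group_add} set"
  shows "compact (UNIV :: 'a set) \<Longrightarrow> closed_add_subgroup S \<Longrightarrow> compact S"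
  using compact_Int_closed[of UNIV S] by (simp add: closed_add_subgroup_def)

lemma closed_add_subgroup_of_int_mult:
  fixes S :: "'a::{topological_space, ring_1} set"
  assumes S: "closed_add_subgroup S" and a: "a \<in> S"
  shows "of_int j * a \<in> S"
proof -
  have nat: "of_nat n * a \<in> S" for n
    by (induction n) (use S a in \<open>auto simp: closed_add_subgroup_def distrib_right\<close>)
  show ?thesis
  proof (cases j rule: int_cases)
    case (nonneg n)
    then show ?thesis using nat by simp
  next
    case (neg n)
    then have "of_int j * a = - (of_nat (Suc n) * a)"
      by (simp only: of_int_minus of_int_of_nat_eq mult_minus_left)
    then show ?thesis
      using nat[of "Suc n"] S by (simp add: closed_add_subgroup_def)
  qed
qed

lemma floor_divide_mult_bounds:
  fixes x q :: real
  assumes "q > 0"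
  shows "of_int \<lfloor>x / q\<rfloor> * q \<le> x" and "x < of_int \<lfloor>x / q\<rfloor> * q + q"
proof -
  have "of_int \<lfloor>x / q\<rfloor> \<le> x / q" "x / q < of_int \<lfloor>x / q\<rfloor> + 1"
    by linarith+
  then show "of_int \<lfloor>x / q\<rfloor> * q \<le> x" "x < of_int \<lfloor>x / q\<rfloor> * q + q"
    by (simp_all only: pos_le_divide_eq[OF assms] pos_divide_less_eq[OF assms] distrib_right mult_1)
qed

lemma closed_add_subgroup_real_eq_multiples:
  fixes S :: "real set"
  assumes S: "closed_add_subgroup S" and a: "a \<in> S" "a > 0"
    and gap: "\<And>t. t \<in> S \<Longrightarrow> 0 < t \<Longrightarrow> a \<le> t"
  shows "S = range (\<lambda>j::int. of_int j * a)"
proof (intro equalityI subsetI)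
  fix t assume t: "t \<in> S"
  define r where "r = t - of_int \<lfloor>t / a\<rfloor> * a"
  have "r \<in> S"
    unfolding r_def by (intro closed_add_subgroup_diff[OF S t] closed_add_subgroup_of_int_mult[OF S a(1)])
  moreover have "0 \<le> r" "r < a"
    using floor_divide_mult_bounds[OF a(2), of t] by (simp_all add: r_def)
  ultimately have "r = 0"
    using gap by force
  then show "t \<in> range (\<lambda>j::int. of_int j * a)"
    by (auto simp: r_def)
qed (use closed_add_subgroup_of_int_mult[OF S a(1)] in auto)

lemma closed_add_subgroup_real_eq_UNIV:
  fixes S :: "real set"
  assumes S: "closed_add_subgroup S" and small: "\<And>e. e > 0 \<Longrightarrow> \<exists>q\<in>S. 0 < q \<and> q < e"
  shows "S = UNIV"
proof -
  have "x \<in> closure S" for x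
    unfolding closure_approachable
  proof (intro allI impI)
    fix e :: real assume "e > 0"
    then obtain q where q: "q \<in> S" "0 < q" "q < e"
      using small by blast
    have "of_int \<lfloor>x / q\<rfloor> * q \<in> S"
      by (rule closed_add_subgroup_of_int_mult[OF S q(1)])
    moreover have "dist (of_int \<lfloor>x / q\<rfloor> * q) x < e"
      using floor_divide_mult_bounds[OF q(2), of x] q(3) by (simp add: dist_real_def)
    ultimately show "\<exists>y\<in>S. dist y x < e"
      by blast
  qed
  then show ?thesis
    using S by (auto simp: closed_add_subgroup_def)
qed

lemma closed_add_subgroup_real_cases:
  fixes S :: "real set"
  assumes S: "closed_add_subgroup S" and p: "p \<in> S" "p > 0"
  obtains "S = UNIV" | a where "a > 0" "S = range (\<lambda>j::int. of_int j * a)"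
proof -
  define Q where "Q = {t\<in>S. t > 0}"
  define a where "a = Inf Q"
  have Q: "Q \<noteq> {}" "bdd_below Q"
    using p by (auto simp: Q_def intro: bdd_belowI[of _ 0])
  have "a \<ge> 0"
    unfolding a_def using Q by (intro cInf_greatest) (auto simp: Q_def)
  show thesis
  proof (cases "a > 0")
    case True
    have "a \<in> closure Q"
      unfolding a_def by (rule closure_contains_Inf[OF Q])
    also have "closure Q \<subseteq> S"
      using S by (intro closure_minimal) (auto simp: Q_def closed_add_subgroup_def)
    finally have "S = range (\<lambda>j::int. of_int j * a)"
      using True cInf_lower[OF _ Q(2)]
      by (intro closed_add_subgroup_real_eq_multiples[OF S]) (auto simp: a_def Q_def)
    then show thesis
      using True that(2) by blast
  next
    case False
    then have "\<exists>q\<in>S. 0 < q \<and> q < e" if "e > 0" for e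
      using cInf_lessD[OF Q(1), of e] that \<open>a \<ge> 0\<close> by (auto simp: a_def Q_def)
    then show thesis
      using closed_add_subgroup_real_eq_UNIV[OF S] that(1) by blast
  qed
qed

lemma continuous_additive_eq_scaleR:
  fixes k :: "real \<Rightarrow> 'a::real_normed_vector"
  assumes add: "\<And>s t. k (s + t) = k s + k t" and cont: "continuous_on UNIV k"
  shows "k t = t *\<^sub>R k 1"
proof -
  have k0: "k 0 = 0"
    using add[of 0 0] by simp
  have knat: "k (of_nat n * s) = of_nat n *\<^sub>R k s" for n s
    by (induction n) (auto simp: k0 add distrib_right scaleR_left_distrib)
  have kminus: "k (- s) = - k s" for s
    using add[of "- s" s] k0 by (simp add: add_eq_0_iff2)
  have kint: "k (of_int j * s) = of_int j *\<^sub>R k s" for j s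
  proof (cases j rule: int_cases)
    case (nonneg n)
    then show ?thesis using knat by simp
  next
    case (neg n)
    then have "of_int j * s = - (of_nat (Suc n) * s)"
      by (simp only: of_int_minus of_int_of_nat_eq mult_minus_left)
    then show ?thesis
      using neg by (simp only: kminus knat of_int_minus of_int_of_nat_eq scaleR_minus_left)
  qed
  have "\<rat> \<subseteq> {t. k t = t *\<^sub>R k 1}"
  proof
    fix r :: real assume "r \<in> \<rat>"
    obtain a b :: int where ab: "b > 0" "r = of_int a / of_int b"
      using Rats_cases'[OF \<open>r \<in> \<rat>\<close>] by blast
    have "of_int b *\<^sub>R k r = k (of_int b * r)"
      by (rule kint[symmetric])
    also have "of_int b * r = of_int a"
      using ab by simp
    also have "k (of_int a) = of_int a *\<^sub>R k 1"
      using kint[of a 1] by simp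
    also have "of_int a = of_int b * r"
      using ab by simp
    finally have eq: "of_int b *\<^sub>R k r = of_int b *\<^sub>R (r *\<^sub>R k 1)"
      by (simp only: scaleR_scaleR)
    have "k r = r *\<^sub>R k 1"
      by (rule scaleR_left_imp_eq[OF _ eq]) (use ab(1) in simp)
    then show "r \<in> {t. k t = t *\<^sub>R k 1}"
      by simp
  qed
  moreover have "closed {t. k t = t *\<^sub>R k 1}"
    by (intro closed_Collect_eq cont continuous_intros)
  ultimately have "closure \<rat> \<subseteq> {t. k t = t *\<^sub>R k 1}"
    by (rule closure_minimal)
  then show ?thesis
    by (auto simp: Rats_closure_real)
qed

lemma continuous_Ints_valued_constant:
  fixes f :: "'a::topological_space \<Rightarrow> 'b::real_normed_algebra_1"
  assumes "connected S" "continuous_on S f" "\<And>x. x \<in> S \<Longrightarrow> f x \<in> \<int>"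
  shows "f constant_on S"
proof (rule continuous_discrete_range_constant[OF assms(1,2)])
  fix x assume "x \<in> S"
  have "1 \<le> norm (f y - f x)" if "y \<in> S" "f y \<noteq> f x" for y
  proof -
    obtain n where n: "f y - f x = of_int n"
      using assms(3)[OF \<open>x \<in> S\<close>] assms(3)[OF \<open>y \<in> S\<close>] by (metis Ints_cases Ints_diff)
    with that have "n \<noteq> 0"
      by auto
    then have "1 \<le> \<bar>real_of_int n\<bar>"
      by linarith
    then show ?thesis
      by (simp add: n)
  qed
  then show "\<exists>e>0. \<forall>y. y \<in> S \<and> f y \<noteq> f x \<longrightarrow> e \<le> norm (f y - f x)"
    by (intro exI[of _ 1]) auto
qed

lemma continuous_mult_hom_real_eq_exp:
  fixes g :: "real \<Rightarrow> complex"
  assumes cont: "continuous_on UNIV g" and mult: "\<And>s t. g (s + t) = g s * g t"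
    and nz: "\<And>t. g t \<noteq> 0"
  obtains \<kappa> where "\<And>t. g t = exp (of_real t * \<kappa>)"
proof -
  obtain h where hc: "continuous_on UNIV h" and gh: "\<And>t. g t = exp (h t)"
    using continuous_logarithm_on_contractible[OF cont contractible_UNIV] nz by (metis UNIV_I)
  \<comment> \<open>The defect of h from additivity is a continuous function with values in 2 pi i \<int>.\<close>
  have "h (s + t) - h s - h t = - h 0" for s t
  proof -
    define D where "D = (\<lambda>s. (h (s + t) - h s - h t) / (2 * of_real pi * \<i>))"
    have "D s \<in> \<int>" for s
    proof -
      have "exp (h (s + t)) = exp (h s + h t)"
        using mult[of s t] gh by (simp add: exp_add)
      then obtain n :: int where "h (s + t) = h s + h t + of_int (2 * n) * pi * \<i>"
        by (auto simp: exp_eq)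
      then show ?thesis
        by (simp add: D_def)
    qed
    moreover have "continuous_on UNIV D"
      unfolding D_def by (intro continuous_intros continuous_on_compose2[OF hc]) auto
    ultimately have "D constant_on UNIV"
      by (intro continuous_Ints_valued_constant) auto
    then have "D s = D 0"
      by (auto simp: constant_on_def)
    then have "h (s + t) - h s - h t = h (0 + t) - h 0 - h t"
      unfolding D_def by (subst (asm) divide_cancel_right) auto
    then show ?thesis
      by simp
  qed
  then have add: "h (s + t) - h 0 = (h s - h 0) + (h t - h 0)" for s t
    by (simp add: algebra_simps)
  have "g t = exp (of_real t * (h 1 - h 0))" for t
  proof -
    have "exp (h 0) = 1"
      using mult[of 0 0] nz[of 0] gh[of 0] by simp
    then have "g t = exp (h t - h 0)"
      by (simp add: gh exp_diff)
    also have "h t - h 0 = t *\<^sub>R (h 1 - h 0)"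
      by (rule continuous_additive_eq_scaleR[of "\<lambda>t. h t - h 0", OF add])
        (intro continuous_intros hc)
    finally show ?thesis
      by (simp add: scaleR_conv_of_real)
  qed
  then show thesis
    using that by blast
qed

section \<open>Closed subgroups of the circle and their continuous characters\<close>

lemma cis_Arg_unit:
  assumes "norm z = 1"
  shows "cis (Arg z) = z"
proof -
  have "z \<noteq> 0"
    using assms by auto
  then show ?thesis
    using assms by (simp add: cis_Arg sgn_div_norm)
qed

lemma cis_eq_1_iff: "cis x = 1 \<longleftrightarrow> (\<exists>j::int. x = 2 * pi * of_int j)"
  by (auto simp: cis_conv_exp exp_eq_1)

lemma unit_power_eq_1_iff:
  assumes "norm z = 1"
  shows "z ^ n = 1 \<longleftrightarrow> (\<exists>j::int. real n * Arg z = 2 * pi * of_int j)"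
proof -
  have "z ^ n = cis (real n * Arg z)"
    using Complex.DeMoivre[of "Arg z" n] by (simp add: cis_Arg_unit[OF assms])
  then show ?thesis
    by (simp add: cis_eq_1_iff)
qed

definition closed_circle_subgroup :: "complex set \<Rightarrow> bool" where
  "closed_circle_subgroup T \<longleftrightarrow> closed T \<and> T \<subseteq> sphere 0 1 \<and> 1 \<in> T \<and>
     (\<forall>z\<in>T. \<forall>w\<in>T. z * w \<in> T) \<and> (\<forall>z\<in>T. inverse z \<in> T)"

lemma closed_circle_subgroup_cases:
  assumes T: "closed_circle_subgroup T"
  obtains "T = sphere 0 1" | m where "m > 0" "T = roots_of_unity m"
proof -
  define P where "P = cis -` T"
  have mem_iff: "z \<in> T \<longleftrightarrow> Arg z \<in> P" if "norm z = 1" for z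
    using cis_Arg_unit[OF that] by (simp add: P_def)
  have "closed P"
    using T continuous_on_closed_vimage[OF closed_UNIV, of cis]
    by (auto simp: P_def closed_circle_subgroup_def continuous_on_cis continuous_on_id)
  then have P: "closed_add_subgroup P"
    using T by (auto simp: P_def closed_add_subgroup_def closed_circle_subgroup_def
        simp flip: cis_mult cis_inverse)
  have two_pi: "2 * pi \<in> P"
    using T by (simp add: P_def closed_circle_subgroup_def)
  consider (all) "P = UNIV" | (lattice) a where "a > 0" "P = range (\<lambda>j::int. of_int j * a)"
    using closed_add_subgroup_real_cases[OF P two_pi] by force
  then show thesis
  proof cases
    case all
    have "sphere 0 1 \<subseteq> T"
      using all mem_iff by auto
    then show thesis
      using T that(1) by (auto simp: closed_circle_subgroup_def)
  next
    case (lattice a)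
    then obtain j0 :: int where j0: "2 * pi = of_int j0 * a"
      using two_pi by auto
    define m where "m = nat j0"
    have "of_int j0 * a > 0"
      using j0 pi_gt_zero by linarith
    then have m: "m > 0" "real m = of_int j0"
      using \<open>a > 0\<close> by (auto simp: m_def zero_less_mult_iff)
    have eq: "2 * pi * of_int j = real m * (of_int j * a)" for j :: int
      using j0 m(2) by (metis mult.assoc mult.commute)
    have "z \<in> T \<longleftrightarrow> z ^ m = 1" for z
    proof (cases "norm z = 1")
      case True
      have "z \<in> T \<longleftrightarrow> (\<exists>j::int. Arg z = of_int j * a)"
        using mem_iff[OF True] lattice by auto
      also have "\<dots> \<longleftrightarrow> (\<exists>j::int. real m * Arg z = 2 * pi * of_int j)"
        using m(1) by (simp add: eq)
      also have "\<dots> \<longleftrightarrow> z ^ m = 1"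
        by (rule unit_power_eq_1_iff[OF True, symmetric])
      finally show ?thesis .
    next
      case False
      then show ?thesis
        using T m(1) power_eq_1_iff[of z m] by (auto simp: closed_circle_subgroup_def)
    qed
    then show thesis
      using that(2)[OF m(1)] by (auto simp: roots_of_unity_def)
  qed
qed

lemma continuous_circle_hom_eq_power_int:
  fixes f :: "complex \<Rightarrow> complex"
  assumes cont: "continuous_on (sphere 0 1) f"
    and mult: "\<And>z w. norm z = 1 \<Longrightarrow> norm w = 1 \<Longrightarrow> f (z * w) = f z * f w"
    and nz: "\<And>z. norm z = 1 \<Longrightarrow> f z \<noteq> 0"
  obtains k :: int where "\<And>z. norm z = 1 \<Longrightarrow> f z = z powi k"
proof -
  define g where "g = (\<lambda>t. f (cis t))"
  have "continuous_on UNIV g"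
    unfolding g_def by (rule continuous_on_compose2[OF cont]) (auto intro: continuous_intros)
  moreover have "g (s + t) = g s * g t" for s t
    using mult[of "cis s" "cis t"] by (simp add: g_def cis_mult)
  moreover have "g t \<noteq> 0" for t
    using nz by (simp add: g_def)
  ultimately obtain \<kappa> where \<kappa>: "\<And>t. g t = exp (of_real t * \<kappa>)"
    using continuous_mult_hom_real_eq_exp by blast
  have "exp (of_real (2 * pi) * \<kappa>) = exp (of_real 0 * \<kappa>)"
    using \<kappa>[of "2 * pi"] \<kappa>[of 0] by (simp add: g_def)
  then obtain n :: int where "Re \<kappa> = 0" "Im \<kappa> = of_int n"
    by (auto simp: exp_eq_1)
  then have \<kappa>_eq: "\<kappa> = \<i> * of_int n"
    by (simp add: complex_eq_iff)
  have "f z = z powi n" if "norm z = 1" for z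
  proof -
    have "f z = g (Arg z)"
      by (simp add: g_def cis_Arg_unit[OF that])
    also have "\<dots> = cis (of_int n * Arg z)"
      by (simp add: \<kappa> \<kappa>_eq cis_conv_exp mult_ac)
    also have "\<dots> = z powi n"
      by (simp add: cis_power_int[symmetric] cis_Arg_unit[OF that])
    finally show ?thesis .
  qed
  then show thesis
    using that by blast
qed

lemma roots_of_unity_hom_eq_power:
  fixes f :: "complex \<Rightarrow> complex"
  assumes m: "m > 0"
    and mult: "\<And>z w. z \<in> roots_of_unity m \<Longrightarrow> w \<in> roots_of_unity m \<Longrightarrow> f (z * w) = f z * f w"
    and nz: "f 1 \<noteq> 0"
  obtains k :: nat where "\<And>z. z \<in> roots_of_unity m \<Longrightarrow> f z = z ^ k"
proof -
  define \<omega> where "\<omega> = exp (2 * of_real pi * \<i> / of_nat m)"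
  have \<omega>_power: "exp (2 * of_real pi * \<i> * of_nat j / of_nat m) = \<omega> ^ j" for j
    by (simp add: \<omega>_def flip: exp_of_nat_mult) (simp add: field_simps)
  have \<omega>_order: "\<omega> ^ m = 1"
    using complex_root_unity[of m 1] m \<omega>_power[of 1] by simp
  have power_commute: "(\<omega> ^ i) ^ j = (\<omega> ^ j) ^ i" for i j
    by (simp add: mult.commute flip: power_mult)
  have roots: "z \<in> roots_of_unity m \<longleftrightarrow> (\<exists>j. z = \<omega> ^ j)" for z
  proof
    show "z \<in> roots_of_unity m \<Longrightarrow> \<exists>j. z = \<omega> ^ j"
      using complex_roots_unity[of m] m by (auto simp: roots_of_unity_def \<omega>_power)
    assume "\<exists>j. z = \<omega> ^ j"
    then obtain j where "z = \<omega> ^ j" ..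
    then have "z ^ m = (\<omega> ^ m) ^ j"
      by (simp add: power_commute)
    then show "z \<in> roots_of_unity m"
      by (simp add: \<omega>_order roots_of_unity_def)
  qed
  have \<omega>_power_mem: "\<omega> ^ j \<in> roots_of_unity m" for j
    using roots by blast
  have f1: "f 1 = 1"
    using mult[of 1 1] nz by (simp add: roots_of_unity_def)
  have f_power: "f (\<omega> ^ j) = f \<omega> ^ j" for j
  proof (induction j)
    case 0
    show ?case
      by (simp add: f1)
  next
    case (Suc j)
    have "f (\<omega> * \<omega> ^ j) = f \<omega> * f (\<omega> ^ j)"
      using mult \<omega>_power_mem[of 1] \<omega>_power_mem[of j] by simp
    with Suc show ?case
      by simp
  qed
  have "f \<omega> ^ m = 1"
    using f_power[of m] \<omega>_order f1 by simp
  then have "f \<omega> \<in> roots_of_unity m"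
    by (simp add: roots_of_unity_def)
  then obtain k where k: "f \<omega> = \<omega> ^ k"
    unfolding roots ..
  have "f z = z ^ k" if "z \<in> roots_of_unity m" for z
  proof -
    obtain j where j: "z = \<omega> ^ j"
      using \<open>z \<in> roots_of_unity m\<close> unfolding roots ..
    have "f z = (\<omega> ^ k) ^ j"
      by (simp add: j f_power k)
    also have "\<dots> = z ^ k"
      by (simp add: j power_commute)
    finally show ?thesis .
  qed
  then show thesis
    using that by blast
qed

lemma closed_circle_subgroup_hom_eq_power_int:
  fixes f :: "complex \<Rightarrow> complex"
  assumes T: "closed_circle_subgroup T" and cont: "continuous_on T f"
    and mult: "\<And>z w. z \<in> T \<Longrightarrow> w \<in> T \<Longrightarrow> f (z * w) = f z * f w"
    and nz: "\<And>z. z \<in> T \<Longrightarrow> f z \<noteq> 0"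
  obtains k :: int where "\<And>z. z \<in> T \<Longrightarrow> f z = z powi k"
  using T
proof (cases rule: closed_circle_subgroup_cases)
  case 1
  obtain k where "\<And>z. norm z = 1 \<Longrightarrow> f z = z powi k"
    by (rule continuous_circle_hom_eq_power_int[of f]) (use cont mult nz 1 in auto)
  then show thesis
    using that 1 by auto
next
  case (2 m)
  have "f 1 \<noteq> 0"
    using T nz by (simp add: closed_circle_subgroup_def)
  with 2 mult obtain k where "\<And>z. z \<in> T \<Longrightarrow> f z = z ^ k"
    using roots_of_unity_hom_eq_power[of m f] by blast
  then show thesis
    using that[of "int k"] by (simp add: power_int_of_nat)
qed

section \<open>Characters of a compact abelian group\<close>

lemma character_norm: "is_character c \<Longrightarrow> norm (c x) = 1"
  by (simp add: is_character_def)

lemma character_nonzero: "is_character c \<Longrightarrow> c x \<noteq> 0"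
  using character_norm[of c x] by auto

lemma character_add: "is_character c \<Longrightarrow> c (x + y) = c x * c y"
  by (simp add: is_character_def)

lemma character_continuous: "is_character c \<Longrightarrow> continuous_on UNIV c"
  by (simp add: is_character_def)

lemma character_zero:
  assumes "is_character c"
  shows "c 0 = 1"
  using character_add[OF assms, of 0 0] character_nonzero[OF assms, of 0] by simp

lemma character_minus:
  assumes "is_character c"
  shows "c (- x) = inverse (c x)"
  using character_add[OF assms, of x "- x"] character_zero[OF assms] character_nonzero[OF assms, of x]
  by (simp add: field_simps)

lemma character_diff:
  assumes "is_character c"
  shows "c (x - y) = c x / c y"
  using character_add[OF assms, of x "- y"] character_minus[OF assms, of y]
  by (simp add: divide_inverse)

lemma is_character_one: "is_character (\<lambda>x. 1)"
  by (simp add: is_character_def)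

lemma is_character_mult: "is_character c \<Longrightarrow> is_character d \<Longrightarrow> is_character (\<lambda>x. c x * d x)"
  unfolding is_character_def by (auto simp: norm_mult intro: continuous_intros)

lemma is_character_inverse:
  assumes "is_character c"
  shows "is_character (\<lambda>x. inverse (c x))"
  using character_continuous[OF assms] character_nonzero[OF assms] character_norm[OF assms]
    character_add[OF assms]
  unfolding is_character_def by (auto simp: norm_inverse intro: continuous_intros)

lemma gen_subgroup_characters:
  assumes "\<And>c. c \<in> F \<Longrightarrow> is_character c" and "\<psi> \<in> gen_subgroup F"
  shows "is_character \<psi>"
  using assms(2)
  by induction (auto intro: assms(1) is_character_one is_character_mult is_character_inverse)

lemma gen_subgroup_mono:
  assumes "\<psi> \<in> gen_subgroup F" and "F \<subseteq> F'"
  shows "\<psi> \<in> gen_subgroup F'"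
  using assms(1) by induction (use assms(2) in \<open>auto intro: gen_subgroup.intros\<close>)

lemma gen_subgroup_power:
  assumes "c \<in> gen_subgroup F"
  shows "(\<lambda>x. c x ^ n) \<in> gen_subgroup F"
proof (induction n)
  case 0
  show ?case
    using gen_subgroup.one by simp
next
  case (Suc n)
  show ?case
    using gen_subgroup.mult[OF assms Suc] by simp
qed

lemma gen_subgroup_power_int:
  assumes "c \<in> gen_subgroup F"
  shows "(\<lambda>x. c x powi k) \<in> gen_subgroup F"
proof (cases "k \<ge> 0")
  case True
  then show ?thesis
    using gen_subgroup_power[OF assms, of "nat k"] by (simp add: power_int_def)
next
  case False
  then show ?thesis
    using gen_subgroup.inv[OF gen_subgroup_power[OF assms, of "nat (- k)"]]
    by (simp add: power_int_def power_inverse)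
qed

section \<open>Annihilators and duality\<close>

definition annihilator :: "('g \<Rightarrow> complex) set \<Rightarrow> 'g set" where
  "annihilator F = {x. \<forall>c\<in>F. c x = 1}"

lemma closed_add_subgroup_annihilator:
  fixes F :: "('g::{topological_group_add, ab_group_add} \<Rightarrow> complex) set"
  assumes chars: "\<And>c. c \<in> F \<Longrightarrow> is_character c"
  shows "closed_add_subgroup (annihilator F)"
proof -
  have "annihilator F = (\<Inter>c\<in>F. {x. c x = 1})"
    by (auto simp: annihilator_def)
  moreover have "closed {x. c x = 1}" if "c \<in> F" for c
    by (intro closed_Collect_eq character_continuous[OF chars[OF that]] continuous_on_const)
  ultimately have "closed (annihilator F)"
    by auto
  then show ?thesis
    by (auto simp: closed_add_subgroup_def annihilator_def
        chars character_zero character_add character_minus)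
qed

lemma character_image_closed_circle_subgroup:
  fixes S :: "'g::{topological_group_add, ab_group_add, t2_space} set"
  assumes cpt: "compact (UNIV :: 'g set)" and S: "closed_add_subgroup S" and c: "is_character c"
  shows "closed_circle_subgroup (c ` S)"
proof -
  have "compact S"
    using cpt S by (rule closed_add_subgroup_compact)
  then have "closed (c ` S)"
    by (intro compact_imp_closed compact_continuous_image
        continuous_on_subset[OF character_continuous[OF c]]) auto
  moreover have "c x * c y \<in> c ` S" "inverse (c x) \<in> c ` S" if "x \<in> S" "y \<in> S" for x y
    using S that by (auto simp: closed_add_subgroup_def character_add[OF c, symmetric]
        character_minus[OF c, symmetric])
  ultimately show ?thesis
    using S by (auto simp: closed_circle_subgroup_def character_norm[OF c]
        character_zero[OF c, symmetric] closed_add_subgroup_def)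
qed

lemma continuous_on_compact_image_factor:
  fixes c :: "'a::topological_space \<Rightarrow> 'b::t2_space" and f :: "'b \<Rightarrow> 'c::topological_space"
  assumes S: "compact S" and c: "continuous_on S c" and fc: "continuous_on S (f \<circ> c)"
  shows "continuous_on (c ` S) f"
  unfolding continuous_on_closed_invariant
proof (intro allI impI)
  fix B :: "'c set"
  assume "closed B"
  have "compact (S \<inter> (f \<circ> c) -` B)"
    by (rule closedin_compact[OF S continuous_closedin_preimage[OF fc \<open>closed B\<close>]])
  then have "closed (c ` (S \<inter> (f \<circ> c) -` B))"
    by (intro compact_imp_closed compact_continuous_image continuous_on_subset[OF c]) auto
  moreover have "c ` (S \<inter> (f \<circ> c) -` B) \<inter> c ` S = f -` B \<inter> c ` S"
    by auto
  ultimately show "\<exists>A. closed A \<and> A \<inter> c ` S = f -` B \<inter> c ` S"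
    by blast
qed

lemma character_eq_power_int_on_subgroup:
  fixes S :: "'g::{topological_group_add, ab_group_add, t2_space} set"
  assumes cpt: "compact (UNIV :: 'g set)" and S: "closed_add_subgroup S"
    and c: "is_character c" and \<eta>: "is_character \<eta>"
    and triv: "\<And>x. x \<in> S \<Longrightarrow> c x = 1 \<Longrightarrow> \<eta> x = 1"
  obtains k :: int where "\<And>x. x \<in> S \<Longrightarrow> \<eta> x = c x powi k"
proof -
  have fibre: "\<eta> s = \<eta> t" if "s \<in> S" "t \<in> S" "c s = c t" for s t
  proof -
    have "\<eta> (s - t) = 1"
      using that closed_add_subgroup_diff[OF S] character_nonzero[OF c, of t]
      by (intro triv) (simp_all add: character_diff[OF c])
    then show ?thesis
      using character_nonzero[OF \<eta>, of t] by (simp add: character_diff[OF \<eta>])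
  qed
  \<comment> \<open>\<eta> factors through c on S; the factor f is continuous because c is a closed map on
    the compact set S.\<close>
  define f where "f = (\<lambda>z. \<eta> (inv_into S c z))"
  have f_c: "f (c s) = \<eta> s" if "s \<in> S" for s
    unfolding f_def using that by (intro fibre) (auto intro: inv_into_into f_inv_into_f)
  have "compact S"
    using cpt S by (rule closed_add_subgroup_compact)
  moreover have "continuous_on S (f \<circ> c)"
    using continuous_on_subset[OF character_continuous[OF \<eta>]]
    by (rule continuous_on_eq) (auto simp: f_c)
  ultimately have "continuous_on (c ` S) f"
    using character_continuous[OF c]
    by (intro continuous_on_compact_image_factor) (auto intro: continuous_on_subset)
  moreover have "f (z * w) = f z * f w" if zw: "z \<in> c ` S" "w \<in> c ` S" for z w
  proof -
    obtain x y where "x \<in> S" "y \<in> S" "z = c x" "w = c y"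
      using zw by blast
    moreover have "x + y \<in> S"
      using S \<open>x \<in> S\<close> \<open>y \<in> S\<close> by (simp add: closed_add_subgroup_def)
    ultimately show ?thesis
      by (simp add: f_c character_add[OF c, symmetric] character_add[OF \<eta>])
  qed
  moreover have "f z \<noteq> 0" if "z \<in> c ` S" for z
    using that f_c character_nonzero[OF \<eta>] by auto
  ultimately obtain k where "\<And>z. z \<in> c ` S \<Longrightarrow> f z = z powi k"
    using character_image_closed_circle_subgroup[OF cpt S c]
    by (elim closed_circle_subgroup_hom_eq_power_int) blast+
  then show thesis
    using that[of k] f_c by simp
qed

lemma character_trivial_on_annihilator_agrees_with_gen_subgroup:
  fixes F :: "('g::{topological_group_add, ab_group_add, t2_space} \<Rightarrow> complex) set"
  assumes cpt: "compact (UNIV :: 'g set)" and "finite F" and "\<And>c. c \<in> F \<Longrightarrow> is_character c"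
    and "closed_add_subgroup S" and "is_character \<eta>"
    and "\<And>x. x \<in> S \<inter> annihilator F \<Longrightarrow> \<eta> x = 1"
  shows "\<exists>\<psi>\<in>gen_subgroup F. \<forall>x\<in>S. \<eta> x = \<psi> x"
  using assms(2-)
proof (induction F arbitrary: S \<eta> rule: finite_induct)
  case empty
  then show ?case
    by (intro bexI[of _ "\<lambda>x. 1"]) (auto simp: annihilator_def intro: gen_subgroup.one)
next
  case (insert c F)
  have c: "is_character c" and chars: "\<And>d. d \<in> F \<Longrightarrow> is_character d"
    using insert.prems(1) by auto
  have "\<exists>\<psi>\<in>gen_subgroup F. \<forall>x\<in>S \<inter> annihilator {c}. \<eta> x = \<psi> x"
  proof (rule insert.IH[OF chars _ insert.prems(3)])
    show "closed_add_subgroup (S \<inter> annihilator {c})"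
      by (intro closed_add_subgroup_Int insert.prems(2) closed_add_subgroup_annihilator)
        (use c in simp)
    fix x assume "x \<in> S \<inter> annihilator {c} \<inter> annihilator F"
    then show "\<eta> x = 1"
      by (intro insert.prems(4)) (auto simp: annihilator_def)
  qed
  then obtain \<psi> where \<psi>: "\<psi> \<in> gen_subgroup F" "\<And>x. x \<in> S \<inter> annihilator {c} \<Longrightarrow> \<eta> x = \<psi> x"
    by blast
  have \<psi>_char: "is_character \<psi>"
    using chars \<psi>(1) by (rule gen_subgroup_characters)
  have quotient_char: "is_character (\<lambda>x. \<eta> x * inverse (\<psi> x))"
    using insert.prems(3) \<psi>_char by (intro is_character_mult is_character_inverse)
  have quotient_triv: "\<eta> x * inverse (\<psi> x) = 1" if "x \<in> S" "c x = 1" for x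
    using that \<psi>(2)[of x] character_nonzero[OF \<psi>_char, of x] by (simp add: annihilator_def)
  obtain k where k: "\<And>x. x \<in> S \<Longrightarrow> \<eta> x * inverse (\<psi> x) = c x powi k"
    using character_eq_power_int_on_subgroup[OF cpt insert.prems(2) c quotient_char quotient_triv]
    by blast
  have "\<psi> \<in> gen_subgroup (insert c F)"
    using gen_subgroup_mono[OF \<psi>(1)] by blast
  moreover have "(\<lambda>x. c x powi k) \<in> gen_subgroup (insert c F)"
    by (rule gen_subgroup_power_int[OF gen_subgroup.base]) simp
  ultimately have mem: "(\<lambda>x. \<psi> x * c x powi k) \<in> gen_subgroup (insert c F)"
    by (rule gen_subgroup.mult)
  have eq: "\<eta> x = \<psi> x * c x powi k" if "x \<in> S" for x
  proof -
    have "\<eta> x = (\<eta> x * inverse (\<psi> x)) * \<psi> x"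
      using character_nonzero[OF \<psi>_char, of x] by (simp add: mult.assoc)
    also have "\<dots> = \<psi> x * c x powi k"
      unfolding k[OF that] by (rule mult.commute)
    finally show ?thesis .
  qed
  show ?case
    by (rule bexI[OF _ mem]) (simp add: eq)
qed

lemma character_image_annihilator_finite:
  fixes F :: "('g::{topological_group_add, ab_group_add, t2_space} \<Rightarrow> complex) set"
  assumes cpt: "compact (UNIV :: 'g set)" and F: "finite F" and chars: "\<And>c. c \<in> F \<Longrightarrow> is_character c"
    and \<gamma>: "is_character \<gamma>" and indep: "gen_subgroup F \<inter> gen_subgroup {\<gamma>} \<subseteq> {\<lambda>x. 1}"
  shows "\<gamma> ` UNIV \<subseteq> \<gamma> ` annihilator F"
proof -
  have "closed_circle_subgroup (\<gamma> ` annihilator F)"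
    using cpt closed_add_subgroup_annihilator[OF chars] \<gamma> by (rule character_image_closed_circle_subgroup)
  then show ?thesis
  proof (cases rule: closed_circle_subgroup_cases)
    case 1
    then show ?thesis
      using character_norm[OF \<gamma>] by auto
  next
    case (2 m)
    have \<gamma>_power: "(\<lambda>x. \<gamma> x ^ m) \<in> gen_subgroup {\<gamma>}"
      by (rule gen_subgroup_power[OF gen_subgroup.base]) simp
    have "\<exists>\<psi>\<in>gen_subgroup F. \<forall>x\<in>UNIV. \<gamma> x ^ m = \<psi> x"
    proof (rule character_trivial_on_annihilator_agrees_with_gen_subgroup[OF cpt F chars])
      show "closed_add_subgroup (UNIV :: 'g set)"
        by (simp add: closed_add_subgroup_def)
      show "is_character (\<lambda>x. \<gamma> x ^ m)"
        using \<gamma>_power by (rule gen_subgroup_characters[rotated]) (use \<gamma> in simp)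
      fix x assume "x \<in> UNIV \<inter> annihilator F"
      then have "\<gamma> x \<in> \<gamma> ` annihilator F"
        by blast
      then show "\<gamma> x ^ m = 1"
        using 2 by (simp add: roots_of_unity_def)
    qed
    then obtain \<psi> where "\<psi> \<in> gen_subgroup F" "(\<lambda>x. \<gamma> x ^ m) = \<psi>"
      by auto
    then have "(\<lambda>x. \<gamma> x ^ m) \<in> gen_subgroup F \<inter> gen_subgroup {\<gamma>}"
      using \<gamma>_power by simp
    then have "(\<lambda>x. \<gamma> x ^ m) = (\<lambda>x. 1)"
      using subsetD[OF indep] by simp
    then have "\<gamma> x \<in> \<gamma> ` annihilator F" for x
      using 2 by (simp add: roots_of_unity_def fun_eq_iff)
    then show ?thesis
      by blast
  qed
qed

lemma character_image_annihilator:
  fixes E :: "('g::{topological_group_add, ab_group_add, t2_space} \<Rightarrow> complex) set"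
  assumes cpt: "compact (UNIV :: 'g set)" and chars: "\<And>c. c \<in> E \<Longrightarrow> is_character c"
    and \<gamma>: "is_character \<gamma>" and indep: "gen_subgroup E \<inter> gen_subgroup {\<gamma>} \<subseteq> {\<lambda>x. 1}"
  shows "\<gamma> ` annihilator E = \<gamma> ` UNIV"
proof (intro equalityI subsetI)
  fix z
  assume "z \<in> \<gamma> ` UNIV"
  have closed_fibre: "closed {x. d x = w}" if "is_character d" for d w
    by (intro closed_Collect_eq character_continuous[OF that] continuous_on_const)
  have "compact {x. \<gamma> x = z}"
    using compact_Int_closed[OF cpt closed_fibre[OF \<gamma>]] by simp
  then have "{x. \<gamma> x = z} \<inter> (\<Inter>c\<in>E. {x. c x = 1}) \<noteq> {}"
  proof (rule compact_imp_fip_image)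
    show "closed {x. c x = 1}" if "c \<in> E" for c
      using closed_fibre chars that by blast
    fix F assume "finite F" "F \<subseteq> E"
    moreover have "gen_subgroup F \<inter> gen_subgroup {\<gamma>} \<subseteq> {\<lambda>x. 1}"
      using indep gen_subgroup_mono[OF _ \<open>F \<subseteq> E\<close>] by blast
    ultimately have "z \<in> \<gamma> ` annihilator F"
      using character_image_annihilator_finite[OF cpt _ _ \<gamma>, of F] chars \<open>z \<in> \<gamma> ` UNIV\<close> by blast
    then show "{x. \<gamma> x = z} \<inter> (\<Inter>c\<in>F. {x. c x = 1}) \<noteq> {}"
      by (auto simp: annihilator_def)
  qed
  then show "z \<in> \<gamma> ` annihilator E"
    by (auto simp: annihilator_def)
qed auto

theorem corollary2p6:
  fixes E :: "('g::{topological_group_add, ab_group_add, t2_space} \<Rightarrow> complex) set"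
    and \<gamma> :: "'g \<Rightarrow> complex" and N :: nat
  assumes "compact (UNIV :: 'g set)"
    and "N \<ge> 1"
    and "E \<subseteq> dual_group"
    and "N_PR N E"
    and "\<gamma> \<in> dual_group"
    and "gen_subgroup E \<inter> gen_subgroup {\<gamma>} = {(\<lambda>x. 1)}"
  shows "N_PR N (translate_set \<gamma> E)"
  unfolding N_PR_def
proof (intro allI impI)
  fix \<phi> :: "('g \<Rightarrow> complex) \<Rightarrow> complex"
  assume \<phi>: "\<forall>d\<in>translate_set \<gamma> E. \<phi> d \<in> roots_of_unity N"
  have \<gamma>: "is_character \<gamma>" and chars: "\<And>c. c \<in> E \<Longrightarrow> is_character c"
    using assms(3,5) by (auto simp: dual_group_def)
  have "\<forall>c\<in>E. \<phi> (\<lambda>x. \<gamma> x * c x) \<in> roots_of_unity N"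
    using \<phi> by (simp add: translate_set_def)
  then obtain x0 where x0: "\<forall>c\<in>E. \<phi> (\<lambda>x. \<gamma> x * c x) = c x0"
    using assms(4)[unfolded N_PR_def, THEN spec[of _ "\<lambda>c. \<phi> (\<lambda>x. \<gamma> x * c x)"]] by blast
  have "\<gamma> (- x0) \<in> \<gamma> ` annihilator E"
    using character_image_annihilator[OF assms(1) chars \<gamma>] assms(6) by simp
  then obtain y where y: "y \<in> annihilator E" "\<gamma> y = \<gamma> (- x0)"
    by (metis imageE)
  have "\<gamma> (x0 + y) = 1"
    using y(2) by (simp add: character_add[OF \<gamma>] character_minus[OF \<gamma>] character_nonzero[OF \<gamma>])
  then have "\<phi> d = d (x0 + y)" if "d \<in> translate_set \<gamma> E" for d
    using that x0 y(1) by (auto simp: translate_set_def annihilator_def character_add chars)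
  then show "\<exists>x. \<forall>d\<in>translate_set \<gamma> E. \<phi> d = d x"
    by blast
qed

end
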